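(* Assume all struts are straight, let $k\ge0$ and $n=k+1$. Then there exists a constant $k_d>0$ (possibly depending on $V_k$ and $M_n$) such that \[ \inf_{\psi\in M_n\setminus\{0\}}\ \sup_{\Sigma\in V_k\setminus\{0\}}\frac{b(\Sigma,\psi)}{\|\Sigma\|_{V}\|\psi\|_{M}}\ge k_d . \]
   Context: Network: a stent is modelled by a finite connected graph with vertices $j=1,\dots,n_{\mathcal V}$ and oriented edges $i=1,\dots,n_{\mathcal E}$. $J_j^-$ ($J_j^+$) is the set of edges leaving (entering) vertex $j$. Edge $i$ is a straight segment of length $\ell^i>0$, parametrized by $\Phi^i(s)=\Phi^i(0)+s\,t^i$, $s\in[0,\ell^i]$, with constant unit tangent $t^i$; $s=0$ at the vertex it leaves, $s=\ell^i$ at the vertex it enters. Matrices: $A^+_{I}\in\mathbb{R}^{3n_{\mathcal V}\times 3n_{\mathcal E}}$ has $3\times3$ block $I_3$ in block row $j$, block column $i$ if $i\in J_j^+$ and $0$ otherwise; $A^-_I$ likewise with $J_j^-$. Spaces: $L^2(\mathcal N;\mathbb{R}^3)=\prod_iL^2(0,\ell^i;\mathbb{R}^3)$, $L^2_{H^1}(\mathcal N;\mathbb{R}^3)=\prod_iH^1(0,\ell^i;\mathbb{R}^3)$, product norms; $\int_{\mathcal N}v=\sum_i\int_0^{\ell^i}v^i\,ds$. $V=L^2(\mathcal N;\mathbb{R}^3)^2\times(\mathbb{R}^{3n_{\mathcal E}})^4\times\mathbb{R}^3\times\mathbb{R}^3$ with elements $\Sigma=(q,p,P_+,P_-,Q_+,Q_-,\alpha,\beta)$,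 $M=L^2_{H^1}(\mathcal N;\mathbb{R}^3)^2\times\mathbb{R}^{3n_{\mathcal V}}\times\mathbb{R}^{3n_{\mathcal V}}$ with elements $\psi=(v,w,V,W)$, product Hilbert norms. $P_m(\mathcal N)$ = functions that on each edge are polynomials of degree at most $m$ (no continuity at vertices); $V_k=P_k(\mathcal N)^3\times P_k(\mathcal N)^3\times(\mathbb{R}^{3n_{\mathcal E}})^4\times\mathbb{R}^3\times\mathbb{R}^3\subset V$, $M_n=P_n(\mathcal N)^3\times P_n(\mathcal N)^3\times\mathbb{R}^{3n_{\mathcal V}}\times\mathbb{R}^{3n_{\mathcal V}}\subset M$ with the induced norms. $b(\Sigma,\psi)=\sum_i\int_0^{\ell^i}\big(-p^i\cdot(\partial_sv^i+t^i\times w^i)-q^i\cdot\partial_sw^i\big)ds+\sum_i\big(P^i_+\cdot v^i(\ell^i)-P^i_-\cdot v^i(0)\big)+\sum_i\big(Q^i_+\cdot w^i(\ell^i)-Q^i_-\cdot w^i(0)\big)-(A^+_IP_+-A^-_IP_-)\cdot V-(A^+_IQ_+-A^-_IQ_-)\cdot W+\alpha\cdot\int_{\mathcal N}v+\beta\cdot\int_{\mathcal N}w$. *)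

theory Defs
  imports "HOL-Analysis.Analysis"
begin

text \<open>A network of straight struts: vertices 0..<nV, oriented edges 0..<nE.
  Edge i leaves vertex src i and enters vertex tgt i, has length ell i and
  constant unit tangent tan i; pos j is the position of vertex j in R^3.\<close>
record network =
  nV  :: nat
  nE  :: nat
  src :: "nat \<Rightarrow> nat"
  tgt :: "nat \<Rightarrow> nat"
  ell :: "nat \<Rightarrow> real"
  tan :: "nat \<Rightarrow> real^3"
  pos :: "nat \<Rightarrow> real^3"

definition edge_rel :: "network \<Rightarrow> (nat \<times> nat) set" where
  "edge_rel N = {(src N i, tgt N i) | i. i < nE N} \<union> {(tgt N i, src N i) | i. i < nE N}"

text \<open>Finite connected graph whose edges are straight segments
  Phi^i(s) = pos (src i) + s * tan i, s in [0, ell i], ending at pos (tgt i).\<close>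
definition straight_network :: "network \<Rightarrow> bool" where
  "straight_network N \<longleftrightarrow>
     0 < nV N \<and> 0 < nE N \<and>
     (\<forall>i<nE N. src N i < nV N \<and> tgt N i < nV N \<and> 0 < ell N i \<and> norm (tan N i) = 1 \<and>
                pos N (src N i) + ell N i *\<^sub>R tan N i = pos N (tgt N i)) \<and>
     (\<forall>j<nV N. \<forall>j'<nV N. (j, j') \<in> (edge_rel N)\<^sup>*)"

text \<open>Elements Sigma = (q,p,P+,P-,Q+,Q-,alpha,beta) of V and psi = (v,w,V,W) of M.
  Functions on the network are given edgewise: q i is the function on edge i.\<close>
record sigmaV =
  sq  :: "nat \<Rightarrow> real \<Rightarrow> real^3"
  sp  :: "nat \<Rightarrow> real \<Rightarrow> real^3"
  sPp :: "nat \<Rightarrow> real^3"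
  sPm :: "nat \<Rightarrow> real^3"
  sQp :: "nat \<Rightarrow> real^3"
  sQm :: "nat \<Rightarrow> real^3"
  salpha :: "real^3"
  sbeta  :: "real^3"

record psiM =
  pv :: "nat \<Rightarrow> real \<Rightarrow> real^3"
  pw :: "nat \<Rightarrow> real \<Rightarrow> real^3"
  pV :: "nat \<Rightarrow> real^3"
  pW :: "nat \<Rightarrow> real^3"

definition polyfun :: "nat \<Rightarrow> (real \<Rightarrow> real^3) \<Rightarrow> bool" where
  "polyfun m f \<longleftrightarrow> (\<exists>c :: nat \<Rightarrow> real^3. \<forall>s. f s = (\<Sum>j\<le>m. s ^ j *\<^sub>R c j))"

text \<open>P_m(N)^3: edgewise polynomials of degree at most m (junk indices set to 0).\<close>
definition Pm_net :: "network \<Rightarrow> nat \<Rightarrow> (nat \<Rightarrow> real \<Rightarrow> real^3) set" where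
  "Pm_net N m = {f. (\<forall>i<nE N. polyfun m (f i)) \<and> (\<forall>i\<ge>nE N. f i = (\<lambda>_. 0))}"

text \<open>Vectors in R^{3 n} represented as n blocks in R^3 (junk indices set to 0).\<close>
definition blockvec :: "nat \<Rightarrow> (nat \<Rightarrow> real^3) set" where
  "blockvec n = {x. \<forall>i\<ge>n. x i = 0}"

definition Vk :: "network \<Rightarrow> nat \<Rightarrow> sigmaV set" where
  "Vk N k = {S. sq S \<in> Pm_net N k \<and> sp S \<in> Pm_net N k \<and>
     sPp S \<in> blockvec (nE N) \<and> sPm S \<in> blockvec (nE N) \<and>
     sQp S \<in> blockvec (nE N) \<and> sQm S \<in> blockvec (nE N)}"

definition Mn :: "network \<Rightarrow> nat \<Rightarrow> psiM set" where
  "Mn N n = {P. pv P \<in> Pm_net N n \<and> pw P \<in> Pm_net N n \<and>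
     pV P \<in> blockvec (nV N) \<and> pW P \<in> blockvec (nV N)}"

definition zeroV :: sigmaV where
  "zeroV = \<lparr>sq = (\<lambda>_ _. 0), sp = (\<lambda>_ _. 0), sPp = (\<lambda>_. 0), sPm = (\<lambda>_. 0),
            sQp = (\<lambda>_. 0), sQm = (\<lambda>_. 0), salpha = 0, sbeta = 0\<rparr>"

definition zeroM :: psiM where
  "zeroM = \<lparr>pv = (\<lambda>_ _. 0), pw = (\<lambda>_ _. 0), pV = (\<lambda>_. 0), pW = (\<lambda>_. 0)\<rparr>"

definition L2sq :: "network \<Rightarrow> (nat \<Rightarrow> real \<Rightarrow> real^3) \<Rightarrow> real" where
  "L2sq N f = (\<Sum>i<nE N. integral {0..ell N i} (\<lambda>s. (norm (f i s))\<^sup>2))"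

definition H1sq :: "network \<Rightarrow> (nat \<Rightarrow> real \<Rightarrow> real^3) \<Rightarrow> real" where
  "H1sq N f = (\<Sum>i<nE N. integral {0..ell N i}
      (\<lambda>s. (norm (f i s))\<^sup>2 + (norm (vector_derivative (f i) (at s)))\<^sup>2))"

definition vecsq :: "nat \<Rightarrow> (nat \<Rightarrow> real^3) \<Rightarrow> real" where
  "vecsq n x = (\<Sum>i<n. (norm (x i))\<^sup>2)"

definition normV :: "network \<Rightarrow> sigmaV \<Rightarrow> real" where
  "normV N S = sqrt (L2sq N (sq S) + L2sq N (sp S) + vecsq (nE N) (sPp S) + vecsq (nE N) (sPm S)
      + vecsq (nE N) (sQp S) + vecsq (nE N) (sQm S) + (norm (salpha S))\<^sup>2 + (norm (sbeta S))\<^sup>2)"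

definition normM :: "network \<Rightarrow> psiM \<Rightarrow> real" where
  "normM N P = sqrt (H1sq N (pv P) + H1sq N (pw P) + vecsq (nV N) (pV P) + vecsq (nV N) (pW P))"

definition Aplus :: "network \<Rightarrow> (nat \<Rightarrow> real^3) \<Rightarrow> nat \<Rightarrow> real^3" where
  "Aplus N P j = (\<Sum>i | i < nE N \<and> tgt N i = j. P i)"

definition Aminus :: "network \<Rightarrow> (nat \<Rightarrow> real^3) \<Rightarrow> nat \<Rightarrow> real^3" where
  "Aminus N P j = (\<Sum>i | i < nE N \<and> src N i = j. P i)"

definition netint :: "network \<Rightarrow> (nat \<Rightarrow> real \<Rightarrow> real^3) \<Rightarrow> real^3" where
  "netint N f = (\<Sum>i<nE N. integral {0..ell N i} (f i))"

definition bform :: "network \<Rightarrow> sigmaV \<Rightarrow> psiM \<Rightarrow> real" where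
  "bform N S P =
     (\<Sum>i<nE N. integral {0..ell N i} (\<lambda>s.
         - (sp S i s \<bullet> (vector_derivative (pv P i) (at s) + cross3 (tan N i) (pw P i s)))
         - sq S i s \<bullet> vector_derivative (pw P i) (at s)))
   + (\<Sum>i<nE N. sPp S i \<bullet> pv P i (ell N i) - sPm S i \<bullet> pv P i 0)
   + (\<Sum>i<nE N. sQp S i \<bullet> pw P i (ell N i) - sQm S i \<bullet> pw P i 0)
   - (\<Sum>j<nV N. (Aplus N (sPp S) j - Aminus N (sPm S) j) \<bullet> pV P j)
   - (\<Sum>j<nV N. (Aplus N (sQp S) j - Aminus N (sQm S) j) \<bullet> pW P j)
   + salpha S \<bullet> netint N (pv P) + sbeta S \<bullet> netint N (pw P)"

end

theory Submission
  imports Defs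
begin

(* M_n is finite dimensional, so it suffices to find finitely many \<Sigma> \<in> V_k whose values
   b(\<Sigma>, \<psi>) determine \<psi>: then \<psi> \<mapsto> \<Sum>\<^sub>\<Sigma> |b(\<Sigma>, \<psi>)| is continuous and positive on the
   (compact) unit sphere of coefficients, hence bounded below there, while \<parallel>\<psi>\<parallel>_M is bounded
   above; the best test element, up to sign, realises the constant.
   The test elements are the unit vectors of V_k. If b(\<cdot>, \<psi>) vanishes on them, then \<partial>\<^sub>s w is
   L\<^sup>2-orthogonal to P_k on every edge and has degree k = n - 1, so w is edgewise constant; the
   Q\<^sub>\<plusminus>-tests glue these constants to W at the vertices, connectivity makes them one constant,
   and the \<beta>-test (zero mean) makes it 0. With w = 0 the same argument applied to the p-, P\<^sub>\<plusminus>-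
   and \<alpha>-tests gives v = 0 and V = 0. *)

section \<open>Vector-valued polynomials\<close>

definition vpoly :: "nat \<Rightarrow> (nat \<Rightarrow> real^3) \<Rightarrow> real \<Rightarrow> real^3" where
  "vpoly m c s = (\<Sum>j\<le>m. s ^ j *\<^sub>R c j)"

definition deriv_coeffs :: "nat \<Rightarrow> (nat \<Rightarrow> real^3) \<Rightarrow> nat \<Rightarrow> real^3" where
  "deriv_coeffs m c j = (if j < m then real (Suc j) *\<^sub>R c (Suc j) else 0)"

lemma polyfun_iff_vpoly: "polyfun m f \<longleftrightarrow> (\<exists>c. f = vpoly m c)"
  by (auto simp: polyfun_def vpoly_def fun_eq_iff)

lemma vpoly_Suc: "vpoly (Suc m) c s = vpoly m c s + s ^ Suc m *\<^sub>R c (Suc m)"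
  by (simp add: vpoly_def)

lemma vpoly_cong: "(\<And>j. j \<le> m \<Longrightarrow> c j = d j) \<Longrightarrow> vpoly m c = vpoly m d"
  by (simp add: vpoly_def fun_eq_iff)

lemma has_vector_derivative_vpoly:
  "(vpoly m c has_vector_derivative vpoly m (deriv_coeffs m c) s) (at s)"
proof (induction m)
  case 0
  show ?case by (simp add: vpoly_def deriv_coeffs_def)
next
  case (Suc m)
  have "vpoly (Suc m) (deriv_coeffs (Suc m) c) s = vpoly m (deriv_coeffs (Suc m) c) s"
    by (simp add: vpoly_Suc deriv_coeffs_def)
  also have "\<dots> = vpoly m (\<lambda>j. deriv_coeffs m c j + (if j = m then real (Suc m) *\<^sub>R c (Suc m) else 0)) s"
    by (rule fun_cong, rule vpoly_cong) (auto simp: deriv_coeffs_def)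
  also have "\<dots> = vpoly m (deriv_coeffs m c) s + (real (Suc m) * s ^ m) *\<^sub>R c (Suc m)"
    by (simp add: vpoly_def scaleR_add_right sum.distrib if_distrib[of "\<lambda>x. s ^ _ *\<^sub>R x"]
        sum.delta mult.commute cong: if_cong)
  finally have deriv: "vpoly (Suc m) (deriv_coeffs (Suc m) c) s =
      vpoly m (deriv_coeffs m c) s + (real (Suc m) * s ^ m) *\<^sub>R c (Suc m)" .
  have "((\<lambda>s. s ^ Suc m *\<^sub>R c (Suc m)) has_vector_derivative (real (Suc m) * s ^ m) *\<^sub>R c (Suc m)) (at s)"
    using has_vector_derivative_scaleR[OF DERIV_pow[of "Suc m" s] has_vector_derivative_const] by simp
  from has_vector_derivative_add[OF Suc this] show ?case
    unfolding deriv by (simp add: vpoly_Suc[abs_def])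
qed

lemma vector_derivative_vpoly: "vector_derivative (vpoly m c) (at s) = vpoly m (deriv_coeffs m c) s"
  by (rule vector_derivative_at[OF has_vector_derivative_vpoly])

lemma continuous_on_vpoly [continuous_intros]: "continuous_on S (vpoly m c)"
  unfolding vpoly_def[abs_def] by (intro continuous_intros)

lemma vpoly_component: "vpoly m c s $ a = (\<Sum>j\<le>m. c j $ a * s ^ j)"
  by (simp add: vpoly_def mult.commute)

lemma vpoly_scaleR: "vpoly m (\<lambda>j. t *\<^sub>R c j) = (\<lambda>s. t *\<^sub>R vpoly m c s)"
  by (simp add: vpoly_def fun_eq_iff scaleR_sum_right mult.commute)

lemma deriv_coeffs_scaleR: "deriv_coeffs m (\<lambda>j. t *\<^sub>R c j) = (\<lambda>j. t *\<^sub>R deriv_coeffs m c j)"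
  by (simp add: fun_eq_iff deriv_coeffs_def)

lemma vpoly_eq_const: "(\<And>j. 1 \<le> j \<Longrightarrow> j \<le> m \<Longrightarrow> c j = 0) \<Longrightarrow> vpoly m c s = c 0"
  unfolding vpoly_def by (subst sum.mono_neutral_right[of "{..m}" "{0}"]) auto

lemma integral_monomial_times_vpoly:
  "integral {a..b} (\<lambda>s. s ^ e * (vpoly m c s $ i)) = (\<Sum>j\<le>m. c j $ i * integral {a..b} (\<lambda>s. s ^ (e + j)))"
proof -
  have "(\<lambda>s. s ^ e * (vpoly m c s $ i)) = (\<lambda>s. \<Sum>j\<le>m. c j $ i * s ^ (e + j))"
    by (simp add: fun_eq_iff vpoly_component sum_distrib_left power_add mult.left_commute)
  then show ?thesis
    by (simp, subst integral_sum) (auto intro!: integrable_continuous_real continuous_intros)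
qed

lemma integral_norm_vpoly_square:
  "integral {a..b} (\<lambda>s. (norm (vpoly m c s))\<^sup>2) =
     (\<Sum>i\<in>UNIV. \<Sum>j\<le>m. c j $ i * integral {a..b} (\<lambda>s. s ^ j * (vpoly m c s $ i)))"
proof -
  have "(\<lambda>s. (norm (vpoly m c s))\<^sup>2) = (\<lambda>s. \<Sum>i\<in>UNIV. \<Sum>j\<le>m. c j $ i * (s ^ j * (vpoly m c s $ i)))"
    by (simp add: fun_eq_iff power2_norm_eq_inner inner_vec_def vpoly_component[of m c _]
        sum_distrib_left sum_distrib_right mult_ac)
  then have "integral {a..b} (\<lambda>s. (norm (vpoly m c s))\<^sup>2) =
      (\<Sum>i\<in>UNIV. integral {a..b} (\<lambda>s. \<Sum>j\<le>m. c j $ i * (s ^ j * (vpoly m c s $ i))))"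
    by (simp only:, intro integral_sum) (auto intro!: integrable_continuous_real continuous_intros)
  also have "\<dots> = (\<Sum>i\<in>UNIV. \<Sum>j\<le>m. integral {a..b} (\<lambda>s. c j $ i * (s ^ j * (vpoly m c s $ i))))"
    by (intro sum.cong refl integral_sum) (auto intro!: integrable_continuous_real continuous_intros)
  finally show ?thesis by simp
qed

lemma continuous_on_integral_monomial_times_vpoly [continuous_intros]:
  assumes "\<And>j. continuous_on S (\<lambda>x. c x j)"
  shows "continuous_on S (\<lambda>x. integral {a..b} (\<lambda>s. s ^ e * (vpoly m (c x) s $ i)))"
  unfolding integral_monomial_times_vpoly by (intro continuous_intros assms)

lemma continuous_on_integral_norm_vpoly_square [continuous_intros]:
  assumes "\<And>j. continuous_on S (\<lambda>x. c x j)"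
  shows "continuous_on S (\<lambda>x. integral {a..b} (\<lambda>s. (norm (vpoly m (c x) s))\<^sup>2))"
  unfolding integral_norm_vpoly_square by (intro continuous_intros assms)

lemma continuous_on_deriv_coeffs [continuous_intros]:
  assumes "\<And>j. continuous_on S (\<lambda>x. c x j)"
  shows "continuous_on S (\<lambda>x. deriv_coeffs m (c x) j)"
  by (cases "j < m") (auto simp: deriv_coeffs_def intro!: continuous_intros assms)

lemma poly_coeffs_zero_if_square_integral_zero:
  fixes d :: "nat \<Rightarrow> real"
  assumes "a < b" and "integral {a..b} (\<lambda>s. (\<Sum>j\<le>m. d j * s ^ j)\<^sup>2) = 0" and "j \<le> m"
  shows "d j = 0"
proof (rule ccontr)
  let ?p = "\<lambda>s. \<Sum>j\<le>m. d j * s ^ j"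
  assume "d j \<noteq> 0"
  with \<open>j \<le> m\<close> have "finite {s. ?p s = 0}"
    by (intro polyfun_rootbound_finite) auto
  moreover have "{a..b} \<subseteq> {s. ?p s = 0}"
  proof
    fix s assume "s \<in> {a..b}"
    have cont: "continuous_on (cbox a b) (\<lambda>s. (?p s)\<^sup>2)"
      by (intro continuous_intros)
    have "((\<lambda>s. (?p s)\<^sup>2) has_integral 0) (cbox a b)"
      using assms(2) integrable_integral[OF integrable_continuous_real[OF cont[unfolded cbox_interval]]]
      by (simp add: cbox_interval)
    from has_integral_0_cbox_imp_0[OF cont _ this] \<open>s \<in> {a..b}\<close> \<open>a < b\<close> show "s \<in> {s. ?p s = 0}"
      by (auto simp: cbox_interval)
  qed
  ultimately have "finite {a..b}" by (rule finite_subset[rotated])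
  with \<open>a < b\<close> show False using infinite_Icc by blast
qed

lemma poly_coeffs_zero_if_orthogonal_to_monomials:
  fixes d :: "nat \<Rightarrow> real"
  assumes "a < b"
    and orth: "\<And>j. j \<le> m \<Longrightarrow> integral {a..b} (\<lambda>s. s ^ j * (\<Sum>i\<le>m. d i * s ^ i)) = 0"
    and "j \<le> m"
  shows "d j = 0"
proof (rule poly_coeffs_zero_if_square_integral_zero[OF \<open>a < b\<close> _ \<open>j \<le> m\<close>])
  let ?p = "\<lambda>s. \<Sum>i\<le>m. d i * s ^ i"
  have "integral {a..b} (\<lambda>s. (?p s)\<^sup>2) = integral {a..b} (\<lambda>s. \<Sum>j\<le>m. d j * (s ^ j * ?p s))"
    by (simp add: power2_eq_square sum_distrib_right mult.assoc)
  also have "\<dots> = (\<Sum>j\<le>m. d j * integral {a..b} (\<lambda>s. s ^ j * ?p s))"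
    by (subst integral_sum) (auto intro!: integrable_continuous_real continuous_intros)
  also have "\<dots> = 0" using orth by simp
  finally show "integral {a..b} (\<lambda>s. (?p s)\<^sup>2) = 0" .
qed

lemma vpoly_coeffs_zero_if_square_integral_zero:
  assumes "a < b" and zero: "integral {a..b} (\<lambda>s. (norm (vpoly m c s))\<^sup>2) = 0" and "j \<le> m"
  shows "c j = 0"
proof -
  have "c j $ i = 0" for i
  proof (rule poly_coeffs_zero_if_square_integral_zero[OF \<open>a < b\<close> _ \<open>j \<le> m\<close>])
    let ?p = "\<lambda>s. \<Sum>j\<le>m. c j $ i * s ^ j"
    have "integral {a..b} (\<lambda>s. (?p s)\<^sup>2) \<le> integral {a..b} (\<lambda>s. (norm (vpoly m c s))\<^sup>2)"
    proof (rule integral_le)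
      fix s
      have "\<bar>vpoly m c s $ i\<bar> \<le> norm (vpoly m c s)" by (rule component_le_norm_cart)
      then show "(?p s)\<^sup>2 \<le> (norm (vpoly m c s))\<^sup>2"
        by (metis abs_ge_zero power2_abs power_mono vpoly_component)
    qed (auto intro!: integrable_continuous_real continuous_intros)
    moreover have "0 \<le> integral {a..b} (\<lambda>s. (?p s)\<^sup>2)"
      by (intro integral_nonneg integrable_continuous_real continuous_intros) auto
    ultimately show "integral {a..b} (\<lambda>s. (?p s)\<^sup>2) = 0" using zero by linarith
  qed
  then show ?thesis by (simp add: vec_eq_iff)
qed

lemma higher_coeffs_zero_if_derivative_orthogonal:
  assumes "a < b"
    and orth: "\<And>j i. j \<le> k \<Longrightarrow> integral {a..b} (\<lambda>s. s ^ j * (vpoly (Suc k) (deriv_coeffs (Suc k) c) s $ i)) = 0"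
    and "1 \<le> j" "j \<le> Suc k"
  shows "c j = 0"
proof -
  obtain m where m: "j = Suc m" "m \<le> k" using \<open>1 \<le> j\<close> \<open>j \<le> Suc k\<close> by (cases j) auto
  have "deriv_coeffs (Suc k) c m $ i = 0" for i
    by (rule poly_coeffs_zero_if_orthogonal_to_monomials[OF \<open>a < b\<close> _ \<open>m \<le> k\<close>])
       (use orth in \<open>simp add: vpoly_component deriv_coeffs_def\<close>)
  with m show ?thesis by (simp add: deriv_coeffs_def vec_eq_iff)
qed

section \<open>Coefficient coordinates on M_n\<close>

(* Monomial coefficients of v and w on each edge, and the vertex values V and W. *)
type_synonym coeffs =
  "(nat \<Rightarrow> nat \<Rightarrow> real^3) \<times> (nat \<Rightarrow> nat \<Rightarrow> real^3) \<times> (nat \<Rightarrow> real^3) \<times> (nat \<Rightarrow> real^3)"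

definition xv :: "coeffs \<Rightarrow> nat \<Rightarrow> nat \<Rightarrow> real^3" where "xv x = fst x"
definition xw :: "coeffs \<Rightarrow> nat \<Rightarrow> nat \<Rightarrow> real^3" where "xw x = fst (snd x)"
definition xV :: "coeffs \<Rightarrow> nat \<Rightarrow> real^3" where "xV x = fst (snd (snd x))"
definition xW :: "coeffs \<Rightarrow> nat \<Rightarrow> real^3" where "xW x = snd (snd (snd x))"

lemma continuous_on_xv [continuous_intros]: "continuous_on S (\<lambda>x. xv x i j)"
  unfolding xv_def
  by (rule continuous_on_product_then_coordinatewise[where f="\<lambda>x. fst x i"],
      rule continuous_on_product_then_coordinatewise[where f="fst"], intro continuous_intros)

lemma continuous_on_xw [continuous_intros]: "continuous_on S (\<lambda>x. xw x i j)"
  unfolding xw_def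
  by (rule continuous_on_product_then_coordinatewise[where f="\<lambda>x. fst (snd x) i"],
      rule continuous_on_product_then_coordinatewise[where f="\<lambda>x. fst (snd x)"], intro continuous_intros)

lemma continuous_on_xV [continuous_intros]: "continuous_on S (\<lambda>x. xV x j)"
  unfolding xV_def
  by (rule continuous_on_product_then_coordinatewise[where f="\<lambda>x. fst (snd (snd x))"], intro continuous_intros)

lemma continuous_on_xW [continuous_intros]: "continuous_on S (\<lambda>x. xW x j)"
  unfolding xW_def
  by (rule continuous_on_product_then_coordinatewise[where f="\<lambda>x. snd (snd (snd x))"], intro continuous_intros)

definition psi_of :: "network \<Rightarrow> nat \<Rightarrow> coeffs \<Rightarrow> psiM" where
  "psi_of N n x = \<lparr>pv = (\<lambda>i. if i < nE N then vpoly n (xv x i) else (\<lambda>s. 0)),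
                   pw = (\<lambda>i. if i < nE N then vpoly n (xw x i) else (\<lambda>s. 0)),
                   pV = (\<lambda>j. if j < nV N then xV x j else 0),
                   pW = (\<lambda>j. if j < nV N then xW x j else 0)\<rparr>"

definition coeffs_scale :: "real \<Rightarrow> coeffs \<Rightarrow> coeffs" where
  "coeffs_scale t x =
     ((\<lambda>i j. t *\<^sub>R xv x i j), (\<lambda>i j. t *\<^sub>R xw x i j), (\<lambda>j. t *\<^sub>R xV x j), (\<lambda>j. t *\<^sub>R xW x j))"

lemma coeffs_scale_simps [simp]:
  "xv (coeffs_scale t x) = (\<lambda>i j. t *\<^sub>R xv x i j)" "xw (coeffs_scale t x) = (\<lambda>i j. t *\<^sub>R xw x i j)"
  "xV (coeffs_scale t x) = (\<lambda>j. t *\<^sub>R xV x j)" "xW (coeffs_scale t x) = (\<lambda>j. t *\<^sub>R xW x j)"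
  by (simp_all add: coeffs_scale_def xv_def xw_def xV_def xW_def fun_eq_iff)

lemma coeffs_scale_scale: "coeffs_scale a (coeffs_scale b x) = coeffs_scale (a * b) x"
  by (simp add: coeffs_scale_def xv_def xw_def xV_def xW_def)

lemma coeffs_scale_one: "coeffs_scale 1 x = x"
  by (simp add: coeffs_scale_def xv_def xw_def xV_def xW_def)

definition coeffs_supported :: "network \<Rightarrow> nat \<Rightarrow> coeffs \<Rightarrow> bool" where
  "coeffs_supported N n x \<longleftrightarrow>
     (\<forall>i j. nE N \<le> i \<or> n < j \<longrightarrow> xv x i j = 0 \<and> xw x i j = 0) \<and>
     (\<forall>j. nV N \<le> j \<longrightarrow> xV x j = 0 \<and> xW x j = 0)"

definition coeffs_sqnorm :: "network \<Rightarrow> nat \<Rightarrow> coeffs \<Rightarrow> real" where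
  "coeffs_sqnorm N n x =
     (\<Sum>i<nE N. \<Sum>j\<le>n. (norm (xv x i j))\<^sup>2) + (\<Sum>i<nE N. \<Sum>j\<le>n. (norm (xw x i j))\<^sup>2)
     + (\<Sum>j<nV N. (norm (xV x j))\<^sup>2) + (\<Sum>j<nV N. (norm (xW x j))\<^sup>2)"

definition coeffs_sphere :: "network \<Rightarrow> nat \<Rightarrow> coeffs set" where
  "coeffs_sphere N n = {x. coeffs_supported N n x \<and> coeffs_sqnorm N n x = 1}"

lemma coeffs_supported_scale: "coeffs_supported N n x \<Longrightarrow> coeffs_supported N n (coeffs_scale t x)"
  by (simp add: coeffs_supported_def)

lemma coeffs_sqnorm_scale: "coeffs_sqnorm N n (coeffs_scale t x) = t\<^sup>2 * coeffs_sqnorm N n x"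
  by (simp add: coeffs_sqnorm_def sum_distrib_left power_mult_distrib distrib_left)

lemma coeffs_sqnorm_nonneg: "0 \<le> coeffs_sqnorm N n x"
  by (simp add: coeffs_sqnorm_def sum_nonneg)

lemma continuous_on_coeffs_sqnorm: "continuous_on S (coeffs_sqnorm N n)"
  unfolding coeffs_sqnorm_def[abs_def] by (intro continuous_intros)

lemma coeffs_sqnorm_zero_iff:
  assumes "coeffs_supported N n x"
  shows "coeffs_sqnorm N n x = 0 \<longleftrightarrow>
    (\<forall>i<nE N. \<forall>j\<le>n. xv x i j = 0 \<and> xw x i j = 0) \<and> (\<forall>j<nV N. xV x j = 0 \<and> xW x j = 0)"
  by (simp add: coeffs_sqnorm_def add_nonneg_eq_0_iff sum_nonneg sum_nonneg_eq_0_iff) blast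

lemma coeffs_le_sqnorm:
  assumes "coeffs_supported N n x"
  shows "(norm (xv x i j))\<^sup>2 \<le> coeffs_sqnorm N n x" "(norm (xw x i j))\<^sup>2 \<le> coeffs_sqnorm N n x"
    "(norm (xV x j))\<^sup>2 \<le> coeffs_sqnorm N n x" "(norm (xW x j))\<^sup>2 \<le> coeffs_sqnorm N n x"
proof -
  have single: "(norm (f i j))\<^sup>2 \<le> (\<Sum>i<nE N. \<Sum>j\<le>n. (norm (f i j))\<^sup>2)" if "i < nE N" "j \<le> n"
    for f :: "nat \<Rightarrow> nat \<Rightarrow> real^3"
  proof (rule order_trans)
    show "(norm (f i j))\<^sup>2 \<le> (\<Sum>j\<le>n. (norm (f i j))\<^sup>2)"
      using that by (intro member_le_sum) auto
    show "(\<Sum>j\<le>n. (norm (f i j))\<^sup>2) \<le> (\<Sum>i<nE N. \<Sum>j\<le>n. (norm (f i j))\<^sup>2)"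
      using that by (intro member_le_sum[where f="\<lambda>i. \<Sum>j\<le>n. (norm (f i j))\<^sup>2"]) (auto intro: sum_nonneg)
  qed
  have single_vertex: "(norm (f j))\<^sup>2 \<le> (\<Sum>j<nV N. (norm (f j))\<^sup>2)" if "j < nV N" for f :: "nat \<Rightarrow> real^3"
    using that by (intro member_le_sum) auto
  have nonneg: "0 \<le> (\<Sum>i<nE N. \<Sum>j\<le>n. (norm (xv x i j))\<^sup>2)" "0 \<le> (\<Sum>i<nE N. \<Sum>j\<le>n. (norm (xw x i j))\<^sup>2)"
    "0 \<le> (\<Sum>j<nV N. (norm (xV x j))\<^sup>2)" "0 \<le> (\<Sum>j<nV N. (norm (xW x j))\<^sup>2)"
    by (auto intro!: sum_nonneg)
  have outside: "\<not> (i < nE N \<and> j \<le> n) \<Longrightarrow> xv x i j = 0 \<and> xw x i j = 0"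
    "\<not> j < nV N \<Longrightarrow> xV x j = 0 \<and> xW x j = 0"
    using assms by (auto simp: coeffs_supported_def)
  show "(norm (xv x i j))\<^sup>2 \<le> coeffs_sqnorm N n x" "(norm (xw x i j))\<^sup>2 \<le> coeffs_sqnorm N n x"
    using single[of "xv x"] single[of "xw x"] nonneg outside(1) coeffs_sqnorm_nonneg[of N n x]
    unfolding coeffs_sqnorm_def by (cases "i < nE N \<and> j \<le> n"; force)+
  show "(norm (xV x j))\<^sup>2 \<le> coeffs_sqnorm N n x" "(norm (xW x j))\<^sup>2 \<le> coeffs_sqnorm N n x"
    using single_vertex[of "xV x"] single_vertex[of "xW x"] nonneg outside(2) coeffs_sqnorm_nonneg[of N n x]
    unfolding coeffs_sqnorm_def by (cases "j < nV N"; force)+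
qed

lemma closed_coeffs_supported: "closed {x. coeffs_supported N n x}"
proof -
  have "{x. coeffs_supported N n x} =
      (\<Inter>i. \<Inter>j. {x. nE N \<le> i \<or> n < j \<longrightarrow> xv x i j = 0 \<and> xw x i j = 0}) \<inter>
      (\<Inter>j. {x. nV N \<le> j \<longrightarrow> xV x j = 0 \<and> xW x j = 0})"
    by (auto simp: coeffs_supported_def)
  moreover have closed_cond: "closed {x. P \<longrightarrow> f x = 0 \<and> g x = 0}"
    if "continuous_on UNIV f" "continuous_on UNIV g" for P and f g :: "coeffs \<Rightarrow> real^3"
    by (cases P) (simp_all add: Collect_conj_eq closed_Int closed_Collect_eq that)
  ultimately show ?thesis
    by (simp only:) (intro closed_Int closed_INT ballI closed_cond continuous_intros)
qed

lemma compact_Pi_UNIV: "(\<And>i. compact (S i)) \<Longrightarrow> compact (Pi UNIV S)"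
  using compactin_PiE[of "\<lambda>_. euclidean" UNIV S] by (simp add: euclidean_product_topology PiE_UNIV_domain)

lemma compact_coeffs_sphere: "compact (coeffs_sphere N n)"
proof -
  let ?B1 = "Pi UNIV (\<lambda>_. cball (0 :: real^3) 1)"
  define B :: "coeffs set" where "B = Pi UNIV (\<lambda>_. ?B1) \<times> Pi UNIV (\<lambda>_. ?B1) \<times> ?B1 \<times> ?B1"
  have "compact B"
    unfolding B_def by (intro compact_Times compact_Pi_UNIV compact_cball)
  moreover have "coeffs_sphere N n \<subseteq> B"
  proof
    fix x assume "x \<in> coeffs_sphere N n"
    then have "coeffs_supported N n x" "coeffs_sqnorm N n x = 1" by (auto simp: coeffs_sphere_def)
    with coeffs_le_sqnorm[of N n x] have "norm (xv x i j) \<le> 1" "norm (xw x i j) \<le> 1"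
      "norm (xV x j) \<le> 1" "norm (xW x j) \<le> 1" for i j
      by (auto intro: power2_le_imp_le[where y=1])
    then show "x \<in> B" by (simp add: B_def mem_Times_iff xv_def xw_def xV_def xW_def)
  qed
  moreover have "closed (coeffs_sphere N n)"
    unfolding coeffs_sphere_def Collect_conj_eq
    by (intro closed_Int closed_coeffs_supported closed_Collect_eq continuous_on_coeffs_sqnorm
        continuous_on_const)
  ultimately show ?thesis by (metis compact_Int_closed inf.absorb_iff2)
qed

lemma psi_of_Mn: "psi_of N n x \<in> Mn N n"
  by (auto simp: Mn_def Pm_net_def blockvec_def polyfun_iff_vpoly psi_of_def)

lemma psi_of_surj:
  assumes "P \<in> Mn N n"
  obtains x where "coeffs_supported N n x" "psi_of N n x = P"
proof -
  have "\<forall>i<nE N. \<exists>c. pv P i = vpoly n c" "\<forall>i<nE N. \<exists>c. pw P i = vpoly n c"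
    using assms by (auto simp: Mn_def Pm_net_def polyfun_iff_vpoly)
  then obtain cv cw where cv: "\<And>i. i < nE N \<Longrightarrow> pv P i = vpoly n (cv i)"
    and cw: "\<And>i. i < nE N \<Longrightarrow> pw P i = vpoly n (cw i)" by metis
  have outside: "\<And>i. nE N \<le> i \<Longrightarrow> pv P i = (\<lambda>_. 0)" "\<And>i. nE N \<le> i \<Longrightarrow> pw P i = (\<lambda>_. 0)"
    "\<And>j. nV N \<le> j \<Longrightarrow> pV P j = 0" "\<And>j. nV N \<le> j \<Longrightarrow> pW P j = 0"
    using assms by (auto simp: Mn_def Pm_net_def blockvec_def)
  define x :: coeffs where "x = ((\<lambda>i j. if i < nE N \<and> j \<le> n then cv i j else 0),
     (\<lambda>i j. if i < nE N \<and> j \<le> n then cw i j else 0), pV P, pW P)"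
  have "coeffs_supported N n x"
    using outside by (auto simp: coeffs_supported_def x_def xv_def xw_def xV_def xW_def)
  moreover have "vpoly n (xv x i) = pv P i" "vpoly n (xw x i) = pw P i" if "i < nE N" for i
    using that cv cw by (auto simp: x_def xv_def xw_def intro: vpoly_cong)
  then have "psi_of N n x = P"
    using outside by (cases P) (auto simp: psi_of_def x_def xV_def xW_def fun_eq_iff not_less)
  ultimately show ?thesis by (rule that)
qed

lemma psi_of_eq_zeroM:
  assumes "coeffs_supported N n x" "coeffs_sqnorm N n x = 0"
  shows "psi_of N n x = zeroM"
  using assms by (auto simp: coeffs_sqnorm_zero_iff psi_of_def zeroM_def vpoly_def fun_eq_iff)

definition H1_coeffs :: "network \<Rightarrow> nat \<Rightarrow> (nat \<Rightarrow> nat \<Rightarrow> real^3) \<Rightarrow> real" where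
  "H1_coeffs N n c = (\<Sum>i<nE N. integral {0..ell N i} (\<lambda>s. (norm (vpoly n (c i) s))\<^sup>2)
      + integral {0..ell N i} (\<lambda>s. (norm (vpoly n (deriv_coeffs n (c i)) s))\<^sup>2))"

lemma H1sq_vpolys:
  assumes "\<And>i. i < nE N \<Longrightarrow> f i = vpoly n (c i)"
  shows "H1sq N f = H1_coeffs N n c"
  unfolding H1sq_def H1_coeffs_def
  by (intro sum.cong refl, simp add: assms vector_derivative_vpoly, intro integral_add)
     (auto intro!: integrable_continuous_real continuous_intros)

lemma normM_psi_of:
  "normM N (psi_of N n x) = sqrt (H1_coeffs N n (xv x) + H1_coeffs N n (xw x)
      + (\<Sum>j<nV N. (norm (xV x j))\<^sup>2) + (\<Sum>j<nV N. (norm (xW x j))\<^sup>2))"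
  unfolding normM_def by (simp add: H1sq_vpolys psi_of_def vecsq_def)

lemma H1_coeffs_nonneg: "0 \<le> H1_coeffs N n c"
  unfolding H1_coeffs_def
  by (intro sum_nonneg add_nonneg_nonneg integral_nonneg integrable_continuous_real)
     (auto intro!: continuous_intros)

lemma H1_coeffs_scale: "H1_coeffs N n (\<lambda>i j. t *\<^sub>R c i j) = t\<^sup>2 * H1_coeffs N n c"
  by (simp add: H1_coeffs_def vpoly_scaleR deriv_coeffs_scaleR power_mult_distrib
      sum_distrib_left distrib_left)

lemma continuous_on_H1_coeffs [continuous_intros]:
  assumes "\<And>i j. continuous_on S (\<lambda>x. c x i j)"
  shows "continuous_on S (\<lambda>x. H1_coeffs N n (c x))"
  unfolding H1_coeffs_def by (intro continuous_intros assms)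

lemma H1_coeffs_eq_0D:
  assumes "\<And>i. i < nE N \<Longrightarrow> 0 < ell N i" and "H1_coeffs N n c = 0" and "i < nE N" "j \<le> n"
  shows "c i j = 0"
proof (rule vpoly_coeffs_zero_if_square_integral_zero[OF assms(1)[OF \<open>i < nE N\<close>] _ \<open>j \<le> n\<close>])
  let ?I = "\<lambda>c. integral {0..ell N i} (\<lambda>s. (norm (vpoly n c s))\<^sup>2)"
  have nonneg: "0 \<le> integral {0..l} (\<lambda>s. (norm (vpoly n c s))\<^sup>2)" for l c
    by (intro integral_nonneg integrable_continuous_real) (auto intro!: continuous_intros)
  have "?I (c i) + ?I (deriv_coeffs n (c i)) = 0"
    using assms(2,3) unfolding H1_coeffs_def
    by (subst (asm) sum_nonneg_eq_0_iff) (auto intro!: add_nonneg_nonneg nonneg)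
  with nonneg show "?I (c i) = 0" by (metis add_nonneg_eq_0_iff)
qed

lemma continuous_on_normM_psi_of: "continuous_on S (\<lambda>x. normM N (psi_of N n x))"
  unfolding normM_psi_of by (intro continuous_intros)

lemma normM_psi_of_scale: "normM N (psi_of N n (coeffs_scale t x)) = \<bar>t\<bar> * normM N (psi_of N n x)"
proof -
  have "normM N (psi_of N n (coeffs_scale t x)) = sqrt (t\<^sup>2 * (normM N (psi_of N n x))\<^sup>2)"
    by (simp add: normM_psi_of H1_coeffs_scale power_mult_distrib sum_distrib_left distrib_left
        H1_coeffs_nonneg sum_nonneg)
  then show ?thesis by (simp add: real_sqrt_mult normM_psi_of H1_coeffs_nonneg sum_nonneg)
qed

lemma normM_psi_of_pos:
  assumes "\<And>i. i < nE N \<Longrightarrow> 0 < ell N i"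
    and "coeffs_supported N n x" "coeffs_sqnorm N n x \<noteq> 0"
  shows "0 < normM N (psi_of N n x)"
proof (rule ccontr)
  assume "\<not> 0 < normM N (psi_of N n x)"
  moreover have "0 \<le> H1_coeffs N n (xv x)" "0 \<le> H1_coeffs N n (xw x)"
    "0 \<le> (\<Sum>j<nV N. (norm (xV x j))\<^sup>2)" "0 \<le> (\<Sum>j<nV N. (norm (xW x j))\<^sup>2)"
    by (auto intro: H1_coeffs_nonneg sum_nonneg)
  ultimately have "H1_coeffs N n (xv x) = 0 \<and> H1_coeffs N n (xw x) = 0 \<and>
      (\<Sum>j<nV N. (norm (xV x j))\<^sup>2) = 0 \<and> (\<Sum>j<nV N. (norm (xW x j))\<^sup>2) = 0"
    unfolding normM_psi_of real_sqrt_gt_0_iff by linarith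
  then have "coeffs_sqnorm N n x = 0"
    using H1_coeffs_eq_0D[OF assms(1), of n "xv x"] H1_coeffs_eq_0D[OF assms(1), of n "xw x"]
    by (simp add: coeffs_sqnorm_zero_iff[OF assms(2)] sum_nonneg_eq_0_iff)
  with assms(3) show False ..
qed

section \<open>The bilinear form in coordinates\<close>

lemma bform_psi_of:
  "bform N S (psi_of N n x) =
     (\<Sum>i<nE N. integral {0..ell N i} (\<lambda>s.
         - (sp S i s \<bullet> (vpoly n (deriv_coeffs n (xv x i)) s + cross3 (tan N i) (vpoly n (xw x i) s)))
         - sq S i s \<bullet> vpoly n (deriv_coeffs n (xw x i)) s))
   + (\<Sum>i<nE N. sPp S i \<bullet> vpoly n (xv x i) (ell N i) - sPm S i \<bullet> vpoly n (xv x i) 0)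
   + (\<Sum>i<nE N. sQp S i \<bullet> vpoly n (xw x i) (ell N i) - sQm S i \<bullet> vpoly n (xw x i) 0)
   - (\<Sum>j<nV N. (Aplus N (sPp S) j - Aminus N (sPm S) j) \<bullet> xV x j)
   - (\<Sum>j<nV N. (Aplus N (sQp S) j - Aminus N (sQm S) j) \<bullet> xW x j)
   + salpha S \<bullet> (\<Sum>i<nE N. integral {0..ell N i} (vpoly n (xv x i)))
   + sbeta S \<bullet> (\<Sum>i<nE N. integral {0..ell N i} (vpoly n (xw x i)))"
  unfolding bform_def netint_def
  by (intro arg_cong2[where f="(+)"] arg_cong2[where f="(-)"] arg_cong2[where f="(\<bullet>)"] sum.cong refl)
     (auto simp: psi_of_def vector_derivative_vpoly)

lemma bform_psi_of_scale: "bform N S (psi_of N n (coeffs_scale t x)) = t * bform N S (psi_of N n x)"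
proof -
  have "integral {0..ell N i} (\<lambda>s.
         - (sp S i s \<bullet> (t *\<^sub>R vpoly n (deriv_coeffs n (xv x i)) s + cross3 (tan N i) (t *\<^sub>R vpoly n (xw x i) s)))
         - sq S i s \<bullet> (t *\<^sub>R vpoly n (deriv_coeffs n (xw x i)) s)) =
     t * integral {0..ell N i} (\<lambda>s.
         - (sp S i s \<bullet> (vpoly n (deriv_coeffs n (xv x i)) s + cross3 (tan N i) (vpoly n (xw x i) s)))
         - sq S i s \<bullet> vpoly n (deriv_coeffs n (xw x i)) s)" for i
    by (simp add: cross_mult_right inner_add_right algebra_simps flip: integral_mult_right)
  then show ?thesis
    by (simp add: bform_psi_of vpoly_scaleR deriv_coeffs_scaleR sum_distrib_left algebra_simps
        sum_subtractf flip: scaleR_sum_right)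
qed

definition neg_sigma :: "sigmaV \<Rightarrow> sigmaV" where
  "neg_sigma S = \<lparr>sq = (\<lambda>i s. - sq S i s), sp = (\<lambda>i s. - sp S i s), sPp = (\<lambda>i. - sPp S i),
     sPm = (\<lambda>i. - sPm S i), sQp = (\<lambda>i. - sQp S i), sQm = (\<lambda>i. - sQm S i),
     salpha = - salpha S, sbeta = - sbeta S\<rparr>"

lemma polyfun_uminus:
  assumes "polyfun m f"
  shows "polyfun m (\<lambda>s. - f s)"
proof -
  from assms obtain c where "f = vpoly m c" by (auto simp: polyfun_iff_vpoly)
  then have "(\<lambda>s. - f s) = vpoly m (\<lambda>j. (- 1) *\<^sub>R c j)" by (simp only: vpoly_scaleR) simp
  then show ?thesis by (auto simp: polyfun_iff_vpoly)
qed

lemma neg_sigma_Vk: "S \<in> Vk N k \<Longrightarrow> neg_sigma S \<in> Vk N k"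
  unfolding Vk_def Pm_net_def blockvec_def neg_sigma_def by (auto intro: polyfun_uminus)

lemma normV_neg_sigma: "normV N (neg_sigma S) = normV N S"
  by (simp add: normV_def neg_sigma_def L2sq_def vecsq_def)

lemma bform_neg_sigma: "bform N (neg_sigma S) (psi_of N n x) = - bform N S (psi_of N n x)"
proof -
  have flip: "integral {0..l} (\<lambda>s. - (- p s \<bullet> h s) - (- q s) \<bullet> g s) =
      - integral {0..l} (\<lambda>s. - (p s \<bullet> h s) - q s \<bullet> g s)" for l and p q h g :: "real \<Rightarrow> real^3"
    by (subst integral_neg[symmetric]) (simp add: algebra_simps)
  show ?thesis
    unfolding bform_psi_of neg_sigma_def sigmaV.simps flip
    by (simp add: Aplus_def Aminus_def sum_negf algebra_simps sum_subtractf)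
qed

section \<open>Unit test elements of V_k\<close>

lemma straight_networkD:
  assumes "straight_network N"
  shows "0 < nE N" "0 < nV N" "\<And>i. i < nE N \<Longrightarrow> src N i < nV N" "\<And>i. i < nE N \<Longrightarrow> tgt N i < nV N"
    "\<And>i. i < nE N \<Longrightarrow> 0 < ell N i"
  using assms unfolding straight_network_def by auto

lemma integral_if_const: "integral S (\<lambda>s. if P then f s else 0) = (if P then integral S f else 0)"
  by simp

definition test_q :: "nat \<Rightarrow> nat \<Rightarrow> 3 \<Rightarrow> sigmaV" where
  "test_q i j a = zeroV\<lparr>sq := (\<lambda>i' s. if i' = i then s ^ j *\<^sub>R axis a 1 else 0)\<rparr>"

definition test_p :: "nat \<Rightarrow> nat \<Rightarrow> 3 \<Rightarrow> sigmaV" where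
  "test_p i j a = zeroV\<lparr>sp := (\<lambda>i' s. if i' = i then s ^ j *\<^sub>R axis a 1 else 0)\<rparr>"

definition test_Pp :: "nat \<Rightarrow> 3 \<Rightarrow> sigmaV" where
  "test_Pp i a = zeroV\<lparr>sPp := (\<lambda>i'. if i' = i then axis a 1 else 0)\<rparr>"

definition test_Pm :: "nat \<Rightarrow> 3 \<Rightarrow> sigmaV" where
  "test_Pm i a = zeroV\<lparr>sPm := (\<lambda>i'. if i' = i then axis a 1 else 0)\<rparr>"

definition test_Qp :: "nat \<Rightarrow> 3 \<Rightarrow> sigmaV" where
  "test_Qp i a = zeroV\<lparr>sQp := (\<lambda>i'. if i' = i then axis a 1 else 0)\<rparr>"

definition test_Qm :: "nat \<Rightarrow> 3 \<Rightarrow> sigmaV" where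
  "test_Qm i a = zeroV\<lparr>sQm := (\<lambda>i'. if i' = i then axis a 1 else 0)\<rparr>"

definition test_alpha :: "3 \<Rightarrow> sigmaV" where
  "test_alpha a = zeroV\<lparr>salpha := axis a 1\<rparr>"

definition test_beta :: "3 \<Rightarrow> sigmaV" where
  "test_beta a = zeroV\<lparr>sbeta := axis a 1\<rparr>"

lemmas test_defs = test_q_def test_p_def test_Pp_def test_Pm_def test_Qp_def test_Qm_def
  test_alpha_def test_beta_def zeroV_def

definition test_sigmas :: "network \<Rightarrow> nat \<Rightarrow> sigmaV set" where
  "test_sigmas N k =
     (\<lambda>(i, j, a). test_q i j a) ` ({..<nE N} \<times> {..k} \<times> UNIV) \<union>
     (\<lambda>(i, j, a). test_p i j a) ` ({..<nE N} \<times> {..k} \<times> UNIV) \<union>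
     (\<lambda>(i, a). test_Pp i a) ` ({..<nE N} \<times> UNIV) \<union> (\<lambda>(i, a). test_Pm i a) ` ({..<nE N} \<times> UNIV) \<union>
     (\<lambda>(i, a). test_Qp i a) ` ({..<nE N} \<times> UNIV) \<union> (\<lambda>(i, a). test_Qm i a) ` ({..<nE N} \<times> UNIV) \<union>
     range test_alpha \<union> range test_beta"

lemma finite_test_sigmas: "finite (test_sigmas N k)"
  unfolding test_sigmas_def by (intro finite_UnI finite_imageI finite_cartesian_product) auto

lemma test_sigmas_memI:
  "i < nE N \<Longrightarrow> j \<le> k \<Longrightarrow> test_q i j a \<in> test_sigmas N k"
  "i < nE N \<Longrightarrow> j \<le> k \<Longrightarrow> test_p i j a \<in> test_sigmas N k"
  "i < nE N \<Longrightarrow> test_Pp i a \<in> test_sigmas N k" "i < nE N \<Longrightarrow> test_Pm i a \<in> test_sigmas N k"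
  "i < nE N \<Longrightarrow> test_Qp i a \<in> test_sigmas N k" "i < nE N \<Longrightarrow> test_Qm i a \<in> test_sigmas N k"
  "test_alpha a \<in> test_sigmas N k" "test_beta a \<in> test_sigmas N k"
  unfolding test_sigmas_def by (force intro: rev_image_eqI)+

lemma test_sigmas_Vk: "S \<in> test_sigmas N k \<Longrightarrow> S \<in> Vk N k"
proof -
  have "polyfun k (\<lambda>s. if b then s ^ j *\<^sub>R e else 0)" if "j \<le> k" for b j e
    unfolding polyfun_def using that
    by (intro exI[where x="\<lambda>m. if b \<and> m = j then e else 0"])
       (simp add: if_distrib[of "scaleR _"] cong: if_cong)
  moreover have "polyfun k (\<lambda>s. 0)"
    unfolding polyfun_def by (intro exI[where x="\<lambda>_. 0"]) simp
  ultimately show "S \<in> test_sigmas N k \<Longrightarrow> S \<in> Vk N k"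
    unfolding test_sigmas_def
    by (elim UnE imageE; clarsimp simp: Vk_def Pm_net_def blockvec_def test_defs)
qed

lemma integral_square_monomial_pos:
  assumes "0 < l"
  shows "0 < integral {0..l} (\<lambda>s::real. (s ^ j)\<^sup>2)"
proof -
  have "(\<Sum>m\<le>j. (if m = j then 1 else 0) * s ^ m) = s ^ j" for s :: real
    by (simp add: if_distrib[of "\<lambda>v. v * _"] cong: if_cong)
  then have "integral {0..l} (\<lambda>s::real. (s ^ j)\<^sup>2) \<noteq> 0"
    using poly_coeffs_zero_if_square_integral_zero[OF assms, of "\<lambda>m. if m = j then 1 else 0" j j] by auto
  moreover have "0 \<le> integral {0..l} (\<lambda>s::real. (s ^ j)\<^sup>2)"
    by (intro integral_nonneg integrable_continuous_real continuous_intros) auto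
  ultimately show ?thesis by linarith
qed

lemma normV_test_sigmas_pos:
  assumes "straight_network N" and "S \<in> test_sigmas N k"
  shows "0 < normV N S"
proof -
  have "L2sq N (\<lambda>i' s. if i' = i then s ^ j *\<^sub>R axis a 1 else 0) = integral {0..ell N i} (\<lambda>s. (s ^ j)\<^sup>2)"
    if "i < nE N" for i j a
  proof -
    have "(\<bar>s\<bar> ^ j)\<^sup>2 = (s ^ j)\<^sup>2" for s :: real
      by (metis power2_abs power_abs)
    then show ?thesis
      using that unfolding L2sq_def
      by (simp add: if_distrib[of "\<lambda>v. (norm v)\<^sup>2"] integral_if_const cong: if_cong)
  qed
  moreover have "vecsq (nE N) (\<lambda>i'. if i' = i then axis a 1 else 0) = 1" if "i < nE N" for i a
    using that unfolding vecsq_def by (simp add: if_distrib[of "\<lambda>v. (norm v)\<^sup>2"] cong: if_cong)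
  ultimately show ?thesis
    using assms(2) straight_networkD(5)[OF assms(1)] unfolding test_sigmas_def
    by (elim UnE imageE; clarsimp simp: normV_def L2sq_def vecsq_def test_defs integral_square_monomial_pos)
qed

lemma Aplus_single: "i < nE N \<Longrightarrow> Aplus N (\<lambda>i'. if i' = i then v else 0) j = (if tgt N i = j then v else 0)"
  unfolding Aplus_def by (auto simp: sum.delta[unfolded Collect_conj_eq] intro: sum.neutral)

lemma Aminus_single: "i < nE N \<Longrightarrow> Aminus N (\<lambda>i'. if i' = i then v else 0) j = (if src N i = j then v else 0)"
  unfolding Aminus_def by (auto simp: sum.delta[unfolded Collect_conj_eq] intro: sum.neutral)

lemma Aplus_Aminus_zero [simp]: "Aplus N (\<lambda>_. 0) j = 0" "Aminus N (\<lambda>_. 0) j = 0"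
  by (simp_all add: Aplus_def Aminus_def)

lemma bform_test_q:
  "i < nE N \<Longrightarrow> bform N (test_q i j a) (psi_of N n x) =
     - integral {0..ell N i} (\<lambda>s. s ^ j * (vpoly n (deriv_coeffs n (xw x i)) s $ a))"
  by (simp add: bform_psi_of test_defs inner_axis' if_distrib[of "\<lambda>v. v \<bullet> _"] if_distrib[of uminus]
      integral_if_const cong: if_cong)

lemma bform_test_p:
  "i < nE N \<Longrightarrow> bform N (test_p i j a) (psi_of N n x) =
     - integral {0..ell N i} (\<lambda>s. s ^ j *
         ((vpoly n (deriv_coeffs n (xv x i)) s + cross3 (tan N i) (vpoly n (xw x i) s)) $ a))"
  by (simp add: bform_psi_of test_defs inner_axis' if_distrib[of "\<lambda>v. v \<bullet> _"] if_distrib[of uminus]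
      integral_if_const cong: if_cong)

lemma bform_test_Pp:
  "i < nE N \<Longrightarrow> tgt N i < nV N \<Longrightarrow>
    bform N (test_Pp i a) (psi_of N n x) = vpoly n (xv x i) (ell N i) $ a - xV x (tgt N i) $ a"
  by (simp add: bform_psi_of test_defs Aplus_single inner_axis' if_distrib[of "\<lambda>v. v \<bullet> _"] cong: if_cong)

lemma bform_test_Pm:
  "i < nE N \<Longrightarrow> src N i < nV N \<Longrightarrow>
    bform N (test_Pm i a) (psi_of N n x) = xV x (src N i) $ a - vpoly n (xv x i) 0 $ a"
  by (simp add: bform_psi_of test_defs Aminus_single inner_axis' if_distrib[of "\<lambda>v. v \<bullet> _"]
      sum_negf cong: if_cong)

lemma bform_test_Qp:
  "i < nE N \<Longrightarrow> tgt N i < nV N \<Longrightarrow>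
    bform N (test_Qp i a) (psi_of N n x) = vpoly n (xw x i) (ell N i) $ a - xW x (tgt N i) $ a"
  by (simp add: bform_psi_of test_defs Aplus_single inner_axis' if_distrib[of "\<lambda>v. v \<bullet> _"] cong: if_cong)

lemma bform_test_Qm:
  "i < nE N \<Longrightarrow> src N i < nV N \<Longrightarrow>
    bform N (test_Qm i a) (psi_of N n x) = xW x (src N i) $ a - vpoly n (xw x i) 0 $ a"
  by (simp add: bform_psi_of test_defs Aminus_single inner_axis' if_distrib[of "\<lambda>v. v \<bullet> _"]
      sum_negf cong: if_cong)

lemma bform_test_alpha:
  "bform N (test_alpha a) (psi_of N n x) = (\<Sum>i<nE N. integral {0..ell N i} (vpoly n (xv x i))) $ a"
  by (simp add: bform_psi_of test_defs inner_axis')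

lemma bform_test_beta:
  "bform N (test_beta a) (psi_of N n x) = (\<Sum>i<nE N. integral {0..ell N i} (vpoly n (xw x i))) $ a"
  by (simp add: bform_psi_of test_defs inner_axis')

lemma vpoly_add_cross3: "vpoly m c s + cross3 t (vpoly m d s) = vpoly m (\<lambda>j. c j + cross3 t (d j)) s"
  by (induction m) (simp_all add: vpoly_def cross_add_right cross_mult_right algebra_simps)

lemma integral_vpoly_component:
  "integral {a..b} (vpoly m c) $ i = integral {a..b} (\<lambda>s. s ^ 0 * (vpoly m c s $ i))"
  by (simp, rule integral_component_eq_cart[symmetric])
     (auto intro!: integrable_continuous_real continuous_intros)

lemma continuous_on_bform_test_sigmas:
  assumes "straight_network N" and "T \<in> test_sigmas N k"
  shows "continuous_on S (\<lambda>x. bform N T (psi_of N n x))"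
proof -
  note SN = straight_networkD[OF assms(1)]
  have point: "continuous_on S (\<lambda>x. vpoly n (c x) l $ a)" if "\<And>j. continuous_on S (\<lambda>x. c x j)" for c l a
    unfolding vpoly_component by (intro continuous_intros that)
  have mean: "continuous_on S (\<lambda>x. integral {0..l} (vpoly n (c x)) $ a)"
    if "\<And>j. continuous_on S (\<lambda>x. c x j)" for c l a
    unfolding integral_vpoly_component by (intro continuous_intros that)
  from assms(2) show ?thesis
    unfolding test_sigmas_def
    by (elim UnE imageE; clarsimp simp: bform_test_q bform_test_p bform_test_Pp bform_test_Pm
        bform_test_Qp bform_test_Qm bform_test_alpha bform_test_beta SN vpoly_add_cross3)
       (intro point mean continuous_intros continuous_on_cross)+
qed

section \<open>The test elements determine \<psi>\<close>

lemma straight_network_vertex_fun_eq: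
  assumes "straight_network N" and edge: "\<And>i. i < nE N \<Longrightarrow> f (src N i) = f (tgt N i)"
    and "j < nV N" "j' < nV N"
  shows "f j = f j'"
proof -
  from assms(1,3,4) have "(j, j') \<in> (edge_rel N)\<^sup>*" unfolding straight_network_def by blast
  then show ?thesis
  proof (induction rule: rtrancl_induct)
    case (step b c)
    from step(2) obtain i where "i < nE N" "(b, c) = (src N i, tgt N i) \<or> (b, c) = (tgt N i, src N i)"
      unfolding edge_rel_def by blast
    with edge step(3) show ?case by auto
  qed simp
qed

lemma network_vpolys_zero:
  assumes SN: "straight_network N"
    and orth: "\<And>i j a. i < nE N \<Longrightarrow> j \<le> k \<Longrightarrow>
      integral {0..ell N i} (\<lambda>s. s ^ j * (vpoly (Suc k) (deriv_coeffs (Suc k) (c i)) s $ a)) = 0"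
    and at_tgt: "\<And>i. i < nE N \<Longrightarrow> vpoly (Suc k) (c i) (ell N i) = X (tgt N i)"
    and at_src: "\<And>i. i < nE N \<Longrightarrow> vpoly (Suc k) (c i) 0 = X (src N i)"
    and mean: "(\<Sum>i<nE N. integral {0..ell N i} (vpoly (Suc k) (c i))) = 0"
  shows "(\<forall>i<nE N. \<forall>j\<le>Suc k. c i j = 0) \<and> (\<forall>j<nV N. X j = 0)"
proof -
  note F = straight_networkD[OF SN]
  have higher: "c i j = 0" if "i < nE N" "1 \<le> j" "j \<le> Suc k" for i j
    using higher_coeffs_zero_if_derivative_orthogonal[OF F(5) orth] that by blast
  have const: "vpoly (Suc k) (c i) = (\<lambda>s. c i 0)" if "i < nE N" for i
    using higher[OF that] by (intro ext vpoly_eq_const) auto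
  define x0 where "x0 = X (src N 0)"
  have X_const: "X j = x0" if "j < nV N" for j
    unfolding x0_def
    by (rule straight_network_vertex_fun_eq[OF SN _ that F(3)[OF F(1)]])
       (metis at_src at_tgt const)
  have c0: "c i 0 = x0" if "i < nE N" for i
    using at_src[OF that] const[OF that] X_const[OF F(3)[OF that]] by simp
  have "(\<Sum>i<nE N. ell N i) *\<^sub>R x0 = (\<Sum>i<nE N. integral {0..ell N i} (vpoly (Suc k) (c i)))"
    unfolding scaleR_sum_left using F(5) by (intro sum.cong refl) (simp add: const c0 less_imp_le)
  with mean have "(\<Sum>i<nE N. ell N i) *\<^sub>R x0 = 0" by simp
  moreover have "0 < (\<Sum>i<nE N. ell N i)"
    using F(1,5) by (intro sum_pos) auto
  ultimately have "x0 = 0" by simp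
  then show ?thesis
    using higher c0 X_const by (metis less_one not_le)
qed

lemma coeffs_sqnorm_zero_if_test_sigmas_vanish:
  assumes SN: "straight_network N" and n: "n = Suc k" and "coeffs_supported N n x"
    and vanish: "\<And>S. S \<in> test_sigmas N k \<Longrightarrow> bform N S (psi_of N n x) = 0"
  shows "coeffs_sqnorm N n x = 0"
proof -
  note F = straight_networkD[OF SN]
  have w: "(\<forall>i<nE N. \<forall>j\<le>Suc k. xw x i j = 0) \<and> (\<forall>j<nV N. xW x j = 0)"
  proof (rule network_vpolys_zero[OF SN])
    fix i j a assume "i < nE N" "j \<le> k"
    from vanish[OF test_sigmas_memI(1)[OF this, of a]] this show
      "integral {0..ell N i} (\<lambda>s. s ^ j * (vpoly (Suc k) (deriv_coeffs (Suc k) (xw x i)) s $ a)) = 0"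
      by (simp add: bform_test_q n)
  next
    fix i assume i: "i < nE N"
    from vanish[OF test_sigmas_memI(5)[OF i]] vanish[OF test_sigmas_memI(6)[OF i]] i F
    show "vpoly (Suc k) (xw x i) (ell N i) = xW x (tgt N i)" "vpoly (Suc k) (xw x i) 0 = xW x (src N i)"
      by (simp_all add: bform_test_Qp bform_test_Qm n vec_eq_iff)
  next
    from vanish[OF test_sigmas_memI(8)] show "(\<Sum>i<nE N. integral {0..ell N i} (vpoly (Suc k) (xw x i))) = 0"
      by (simp add: bform_test_beta n vec_eq_iff)
  qed
  then have w_zero: "vpoly n (xw x i) s = 0" if "i < nE N" for i s
    using that by (simp add: vpoly_def n)
  have v: "(\<forall>i<nE N. \<forall>j\<le>Suc k. xv x i j = 0) \<and> (\<forall>j<nV N. xV x j = 0)"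
  proof (rule network_vpolys_zero[OF SN])
    fix i j a assume "i < nE N" "j \<le> k"
    from vanish[OF test_sigmas_memI(2)[OF this, of a]] this w_zero show
      "integral {0..ell N i} (\<lambda>s. s ^ j * (vpoly (Suc k) (deriv_coeffs (Suc k) (xv x i)) s $ a)) = 0"
      by (simp add: bform_test_p n)
  next
    fix i assume i: "i < nE N"
    from vanish[OF test_sigmas_memI(3)[OF i]] vanish[OF test_sigmas_memI(4)[OF i]] i F
    show "vpoly (Suc k) (xv x i) (ell N i) = xV x (tgt N i)" "vpoly (Suc k) (xv x i) 0 = xV x (src N i)"
      by (simp_all add: bform_test_Pp bform_test_Pm n vec_eq_iff)
  next
    from vanish[OF test_sigmas_memI(7)] show "(\<Sum>i<nE N. integral {0..ell N i} (vpoly (Suc k) (xv x i))) = 0"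
      by (simp add: bform_test_alpha n vec_eq_iff)
  qed
  show ?thesis
    unfolding coeffs_sqnorm_zero_iff[OF assms(3)] using v w n by simp
qed

section \<open>Boundedness of b\<close>

lemma inner_le_sq_div_add_mult_sq:
  fixes u w :: "'a::real_inner"
  assumes "0 < r"
  shows "u \<bullet> w \<le> (norm u)\<^sup>2 / r + r * (norm w)\<^sup>2"
proof -
  have "0 \<le> (norm u - r * norm w)\<^sup>2 / r" using assms by simp
  then have "2 * (norm u * norm w) \<le> (norm u)\<^sup>2 / r + r * (norm w)\<^sup>2"
    using assms by (simp add: field_simps power2_eq_square)
  moreover have "u \<bullet> w \<le> norm u * norm w" by (rule norm_cauchy_schwarz)
  moreover have "0 \<le> norm u * norm w" by simp
  ultimately show ?thesis by linarith
qed

lemma integral_inner_le: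
  fixes p h :: "real \<Rightarrow> 'a::euclidean_space"
  assumes "0 < r" and "continuous_on {a..b} p" "continuous_on {a..b} h"
  shows "integral {a..b} (\<lambda>s. p s \<bullet> h s) \<le>
    integral {a..b} (\<lambda>s. (norm (p s))\<^sup>2) / r + r * integral {a..b} (\<lambda>s. (norm (h s))\<^sup>2)"
proof -
  have "integral {a..b} (\<lambda>s. p s \<bullet> h s) \<le> integral {a..b} (\<lambda>s. (norm (p s))\<^sup>2 / r + r * (norm (h s))\<^sup>2)"
    using assms
    by (intro integral_le inner_le_sq_div_add_mult_sq) (auto intro!: integrable_continuous_real continuous_intros)
  also have "\<dots> = integral {a..b} (\<lambda>s. (norm (p s))\<^sup>2) / r + r * integral {a..b} (\<lambda>s. (norm (h s))\<^sup>2)"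
    using assms by (subst integral_add) (auto intro!: integrable_continuous_real continuous_intros)
  finally show ?thesis .
qed

lemma sum_inner_le:
  assumes "0 < r"
  shows "(\<Sum>i<m. P i \<bullet> a i) \<le> vecsq m P / r + r * vecsq m a"
  using sum_mono[of "{..<m}", OF inner_le_sq_div_add_mult_sq[OF assms]]
  by (simp add: vecsq_def sum.distrib sum_divide_distrib sum_distrib_left)

lemma vecsq_uminus [simp]: "vecsq m (\<lambda>i. - P i) = vecsq m P"
  by (simp add: vecsq_def)

lemma L2sq_nonneg: "0 \<le> L2sq N f"
  unfolding L2sq_def
  by (intro sum_nonneg, rename_tac i, case_tac "(\<lambda>s. (norm (f i s))\<^sup>2) integrable_on {0..ell N i}")
     (auto intro: integral_nonneg simp: not_integrable_integral)

lemma vecsq_nonneg: "0 \<le> vecsq m P"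
  unfolding vecsq_def by (intro sum_nonneg) auto

lemma Vk_continuous_on:
  assumes "S \<in> Vk N k" "i < nE N"
  shows "continuous_on A (sp S i)" "continuous_on A (sq S i)"
proof -
  from assms obtain c d where "sp S i = vpoly k c" "sq S i = vpoly k d"
    unfolding Vk_def Pm_net_def polyfun_iff_vpoly by blast
  then show "continuous_on A (sp S i)" "continuous_on A (sq S i)"
    by (simp_all add: continuous_on_vpoly)
qed

lemma sum_Aplus_inner:
  assumes "\<And>i. i < nE N \<Longrightarrow> tgt N i < nV N"
  shows "(\<Sum>j<nV N. Aplus N P j \<bullet> V j) = (\<Sum>i<nE N. P i \<bullet> V (tgt N i))"
proof -
  have "(\<Sum>j<nV N. Aplus N P j \<bullet> V j) = (\<Sum>j<nV N. \<Sum>i\<in>{i \<in> {..<nE N}. tgt N i = j}. P i \<bullet> V (tgt N i))"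
    unfolding Aplus_def by (intro sum.cong refl) (auto simp: inner_sum_left)
  also have "\<dots> = (\<Sum>i<nE N. P i \<bullet> V (tgt N i))"
    using assms by (intro sum.group) auto
  finally show ?thesis .
qed

lemma sum_Aminus_inner:
  assumes "\<And>i. i < nE N \<Longrightarrow> src N i < nV N"
  shows "(\<Sum>j<nV N. Aminus N P j \<bullet> V j) = (\<Sum>i<nE N. P i \<bullet> V (src N i))"
proof -
  have "(\<Sum>j<nV N. Aminus N P j \<bullet> V j) = (\<Sum>j<nV N. \<Sum>i\<in>{i \<in> {..<nE N}. src N i = j}. P i \<bullet> V (src N i))"
    unfolding Aminus_def by (intro sum.cong refl) (auto simp: inner_sum_left)
  also have "\<dots> = (\<Sum>i<nE N. P i \<bullet> V (src N i))"
    using assms by (intro sum.group) auto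
  finally show ?thesis .
qed

lemma integral_pairing_le:
  fixes p q h g :: "real \<Rightarrow> 'a::euclidean_space"
  assumes r: "0 < r"
    and cont: "continuous_on {a..b} p" "continuous_on {a..b} q" "continuous_on {a..b} h" "continuous_on {a..b} g"
  shows "integral {a..b} (\<lambda>s. - (p s \<bullet> h s) - q s \<bullet> g s) \<le>
    integral {a..b} (\<lambda>s. (norm (p s))\<^sup>2) / r + integral {a..b} (\<lambda>s. (norm (q s))\<^sup>2) / r
    + r * integral {a..b} (\<lambda>s. (norm (h s))\<^sup>2) + r * integral {a..b} (\<lambda>s. (norm (g s))\<^sup>2)"
proof -
  have neg: "continuous_on {a..b} (\<lambda>s. - p s)" "continuous_on {a..b} (\<lambda>s. - q s)"
    using cont by (auto intro: continuous_intros)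
  have "integral {a..b} (\<lambda>s. - (p s \<bullet> h s) - q s \<bullet> g s) =
      integral {a..b} (\<lambda>s. - p s \<bullet> h s) + integral {a..b} (\<lambda>s. - q s \<bullet> g s)"
    using cont by (subst integral_add[symmetric]) (auto intro!: integrable_continuous_real continuous_intros)
  with integral_inner_le[OF r neg(1) cont(3)] integral_inner_le[OF r neg(2) cont(4)] show ?thesis by simp
qed

lemma sum_pairing_le:
  assumes r: "0 < r"
  shows "(\<Sum>i<m. P i \<bullet> a i - M i \<bullet> b i) \<le> vecsq m P / r + r * vecsq m a + vecsq m M / r + r * vecsq m b"
  using sum_inner_le[OF r, of P a m] sum_inner_le[OF r, of "\<lambda>i. - M i" b m]
  by (simp add: sum_subtractf sum_negf)

lemma sum_vertex_pairing_le:
  assumes "straight_network N" and r: "0 < r"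
  shows "- (\<Sum>j<nV N. (Aplus N P j - Aminus N M j) \<bullet> V j) \<le>
    vecsq (nE N) P / r + r * vecsq (nE N) (\<lambda>i. V (tgt N i))
    + vecsq (nE N) M / r + r * vecsq (nE N) (\<lambda>i. V (src N i))"
  using sum_inner_le[OF r, of "\<lambda>i. - P i" "\<lambda>i. V (tgt N i)" "nE N"]
    sum_inner_le[OF r, of M "\<lambda>i. V (src N i)" "nE N"] straight_networkD[OF assms(1)]
  by (simp add: inner_diff_left sum_subtractf sum_negf sum_Aplus_inner sum_Aminus_inner)

lemma normV_sq:
  "(normV N S)\<^sup>2 = L2sq N (sq S) + L2sq N (sp S) + vecsq (nE N) (sPp S) + vecsq (nE N) (sPm S)
     + vecsq (nE N) (sQp S) + vecsq (nE N) (sQm S) + (norm (salpha S))\<^sup>2 + (norm (sbeta S))\<^sup>2"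
  unfolding normV_def by (intro real_sqrt_pow2 add_nonneg_nonneg L2sq_nonneg vecsq_nonneg zero_le_power2)

(* Weighted AM-GM with weight r = \<parallel>\<Sigma>\<parallel>_V: each pairing of a component of \<Sigma> with a quantity
   depending only on x is at most |component|\<^sup>2 / r + r |quantity|\<^sup>2, and the first parts add up
   to at most 2 r. *)
lemma bform_psi_of_bounded:
  assumes SN: "straight_network N"
  shows "\<exists>C. \<forall>S\<in>Vk N k. 0 < normV N S \<longrightarrow> bform N S (psi_of N n x) \<le> C * normV N S"
proof -
  define h where "h i s = vpoly n (deriv_coeffs n (xv x i)) s + cross3 (tan N i) (vpoly n (xw x i) s)" for i s
  define g where "g i = vpoly n (deriv_coeffs n (xw x i))" for i
  define mv where "mv = (\<Sum>i<nE N. integral {0..ell N i} (vpoly n (xv x i)))"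
  define mw where "mw = (\<Sum>i<nE N. integral {0..ell N i} (vpoly n (xw x i)))"
  let ?E = "vecsq (nE N)"
  define X where "X = L2sq N h + L2sq N g
    + ?E (\<lambda>i. vpoly n (xv x i) (ell N i)) + ?E (\<lambda>i. vpoly n (xv x i) 0)
    + ?E (\<lambda>i. vpoly n (xw x i) (ell N i)) + ?E (\<lambda>i. vpoly n (xw x i) 0)
    + ?E (\<lambda>i. xV x (tgt N i)) + ?E (\<lambda>i. xV x (src N i))
    + ?E (\<lambda>i. xW x (tgt N i)) + ?E (\<lambda>i. xW x (src N i)) + (norm mv)\<^sup>2 + (norm mw)\<^sup>2"
  have "bform N S (psi_of N n x) \<le> (2 + X) * normV N S" if S: "S \<in> Vk N k" and "0 < normV N S" for S
  proof -
    define r where "r = normV N S"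
    have r: "0 < r" using \<open>0 < normV N S\<close> by (simp add: r_def)
    have edge: "integral {0..ell N i} (\<lambda>s. - (sp S i s \<bullet> h i s) - sq S i s \<bullet> g i s) \<le>
        integral {0..ell N i} (\<lambda>s. (norm (sp S i s))\<^sup>2) / r + integral {0..ell N i} (\<lambda>s. (norm (sq S i s))\<^sup>2) / r
        + r * integral {0..ell N i} (\<lambda>s. (norm (h i s))\<^sup>2) + r * integral {0..ell N i} (\<lambda>s. (norm (g i s))\<^sup>2)"
      if "i < nE N" for i
      using Vk_continuous_on[OF S that] unfolding h_def[abs_def] g_def
      by (intro integral_pairing_le r) (auto intro!: continuous_intros continuous_on_cross)
    have I: "(\<Sum>i<nE N. integral {0..ell N i} (\<lambda>s. - (sp S i s \<bullet> h i s) - sq S i s \<bullet> g i s)) \<le>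
        L2sq N (sp S) / r + L2sq N (sq S) / r + r * L2sq N h + r * L2sq N g"
      using sum_mono[of "{..<nE N}", OF edge]
      by (simp add: L2sq_def sum.distrib sum_divide_distrib sum_distrib_left)
    let ?Y = "L2sq N (sp S) + L2sq N (sq S) + ?E (sPp S) + ?E (sPm S) + ?E (sQp S) + ?E (sQm S)
        + ?E (sPp S) + ?E (sPm S) + ?E (sQp S) + ?E (sQm S) + (norm (salpha S))\<^sup>2 + (norm (sbeta S))\<^sup>2"
    have "?Y \<le> 2 * r\<^sup>2"
      using normV_sq[of N S, folded r_def] L2sq_nonneg[of N "sp S"] L2sq_nonneg[of N "sq S"]
        zero_le_power2[of "norm (salpha S)"] zero_le_power2[of "norm (sbeta S)"] by linarith
    then have Y: "?Y / r \<le> 2 * r"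
      using r by (simp add: divide_le_eq power2_eq_square)
    have Y_split: "?Y / r = L2sq N (sp S) / r + L2sq N (sq S) / r + ?E (sPp S) / r + ?E (sPm S) / r
        + ?E (sQp S) / r + ?E (sQm S) / r + ?E (sPp S) / r + ?E (sPm S) / r + ?E (sQp S) / r
        + ?E (sQm S) / r + (norm (salpha S))\<^sup>2 / r + (norm (sbeta S))\<^sup>2 / r"
      by (simp add: add_divide_distrib)
    have X_split: "(2 + X) * r = 2 * r + r * L2sq N h + r * L2sq N g
      + r * ?E (\<lambda>i. vpoly n (xv x i) (ell N i)) + r * ?E (\<lambda>i. vpoly n (xv x i) 0)
      + r * ?E (\<lambda>i. vpoly n (xw x i) (ell N i)) + r * ?E (\<lambda>i. vpoly n (xw x i) 0)
      + r * ?E (\<lambda>i. xV x (tgt N i)) + r * ?E (\<lambda>i. xV x (src N i))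
      + r * ?E (\<lambda>i. xW x (tgt N i)) + r * ?E (\<lambda>i. xW x (src N i)) + r * (norm mv)\<^sup>2 + r * (norm mw)\<^sup>2"
      by (simp add: X_def algebra_simps)
    have b_eq: "bform N S (psi_of N n x) =
        (\<Sum>i<nE N. integral {0..ell N i} (\<lambda>s. - (sp S i s \<bullet> h i s) - sq S i s \<bullet> g i s))
      + (\<Sum>i<nE N. sPp S i \<bullet> vpoly n (xv x i) (ell N i) - sPm S i \<bullet> vpoly n (xv x i) 0)
      + (\<Sum>i<nE N. sQp S i \<bullet> vpoly n (xw x i) (ell N i) - sQm S i \<bullet> vpoly n (xw x i) 0)
      - (\<Sum>j<nV N. (Aplus N (sPp S) j - Aminus N (sPm S) j) \<bullet> xV x j)
      - (\<Sum>j<nV N. (Aplus N (sQp S) j - Aminus N (sQm S) j) \<bullet> xW x j)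
      + salpha S \<bullet> mv + sbeta S \<bullet> mw"
      unfolding bform_psi_of h_def g_def mv_def mw_def ..
    show ?thesis
      unfolding r_def[symmetric]
      using b_eq I
        sum_pairing_le[OF r, where m="nE N" and P="sPp S" and M="sPm S" and a="\<lambda>i. vpoly n (xv x i) (ell N i)"
          and b="\<lambda>i. vpoly n (xv x i) 0"]
        sum_pairing_le[OF r, where m="nE N" and P="sQp S" and M="sQm S" and a="\<lambda>i. vpoly n (xw x i) (ell N i)"
          and b="\<lambda>i. vpoly n (xw x i) 0"]
        sum_vertex_pairing_le[OF SN r, where P="sPp S" and M="sPm S" and V="xV x"]
        sum_vertex_pairing_le[OF SN r, where P="sQp S" and M="sQm S" and V="xW x"]
        inner_le_sq_div_add_mult_sq[OF r, of "salpha S" mv]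
        inner_le_sq_div_add_mult_sq[OF r, of "sbeta S" mw] Y Y_split X_split
      by linarith
  qed
  then show ?thesis by blast
qed

section \<open>The discrete inf-sup constant\<close>

lemma test_sum_bounded_below_on_sphere:
  assumes SN: "straight_network N" and n: "n = Suc k"
  obtains c where "0 < c"
    "\<And>x. x \<in> coeffs_sphere N n \<Longrightarrow> c \<le> (\<Sum>S\<in>test_sigmas N k. \<bar>bform N S (psi_of N n x)\<bar>)"
proof -
  let ?g = "\<lambda>x. \<Sum>S\<in>test_sigmas N k. \<bar>bform N S (psi_of N n x)\<bar>"
  have cont: "continuous_on (coeffs_sphere N n) ?g"
    by (intro continuous_intros continuous_on_bform_test_sigmas[OF SN])
  have pos: "0 < ?g x" if x: "x \<in> coeffs_sphere N n" for x
  proof -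
    have "?g x \<noteq> 0"
    proof
      assume "?g x = 0"
      then have "bform N S (psi_of N n x) = 0" if "S \<in> test_sigmas N k" for S
        using that by (simp add: sum_nonneg_eq_0_iff finite_test_sigmas)
      with x have "coeffs_sqnorm N n x = 0"
        by (intro coeffs_sqnorm_zero_if_test_sigmas_vanish[OF SN n]) (auto simp: coeffs_sphere_def)
      with x show False by (simp add: coeffs_sphere_def)
    qed
    then show ?thesis by (simp add: less_le sum_nonneg)
  qed
  show ?thesis
  proof (cases "coeffs_sphere N n = {}")
    case True
    then show ?thesis by (intro that[of 1]) auto
  next
    case False
    from continuous_attains_inf[OF compact_coeffs_sphere False cont] obtain x0
      where "x0 \<in> coeffs_sphere N n" "\<And>x. x \<in> coeffs_sphere N n \<Longrightarrow> ?g x0 \<le> ?g x" by blast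
    with pos show ?thesis by (intro that[of "?g x0"]) auto
  qed
qed

lemma normM_bounded_on_sphere:
  obtains D where "0 < D" "\<And>x. x \<in> coeffs_sphere N n \<Longrightarrow> normM N (psi_of N n x) \<le> D"
proof -
  have "bounded ((\<lambda>x. normM N (psi_of N n x)) ` coeffs_sphere N n)"
    by (intro compact_imp_bounded compact_continuous_image continuous_on_normM_psi_of compact_coeffs_sphere)
  then obtain D where "0 < D" "\<And>x. x \<in> coeffs_sphere N n \<Longrightarrow> \<bar>normM N (psi_of N n x)\<bar> \<le> D"
    by (auto simp: bounded_pos)
  then show ?thesis by (intro that[of D]) force+
qed

lemma Mn_eq_scaled_sphere:
  assumes "P \<in> Mn N n" "P \<noteq> zeroM"
  obtains \<rho> x where "0 < \<rho>" "x \<in> coeffs_sphere N n" "P = psi_of N n (coeffs_scale \<rho> x)"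
proof -
  obtain y where y: "coeffs_supported N n y" "psi_of N n y = P"
    using psi_of_surj[OF assms(1)] .
  with assms(2) psi_of_eq_zeroM have "coeffs_sqnorm N n y \<noteq> 0" by blast
  then have pos: "0 < coeffs_sqnorm N n y" using coeffs_sqnorm_nonneg[of N n y] by linarith
  define \<rho> where "\<rho> = sqrt (coeffs_sqnorm N n y)"
  have "0 < \<rho>" using pos by (simp add: \<rho>_def)
  moreover have "coeffs_scale (1 / \<rho>) y \<in> coeffs_sphere N n"
    using y pos by (simp add: coeffs_sphere_def coeffs_supported_scale coeffs_sqnorm_scale \<rho>_def power_divide)
  moreover have "P = psi_of N n (coeffs_scale \<rho> (coeffs_scale (1 / \<rho>) y))"
    using y \<open>0 < \<rho>\<close> by (simp add: coeffs_scale_scale coeffs_scale_one)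
  ultimately show ?thesis by (rule that)
qed

lemma normV_nonneg: "0 \<le> normV N S"
  unfolding normV_def by (intro real_sqrt_ge_zero add_nonneg_nonneg L2sq_nonneg vecsq_nonneg zero_le_power2)

lemma Mn_minus_zeroM_nonempty:
  assumes "straight_network N"
  shows "Mn N n - {zeroM} \<noteq> {}"
proof -
  define x :: coeffs where "x = ((\<lambda>i j. 0), (\<lambda>i j. 0), (\<lambda>j. if j = 0 then axis 1 1 else 0), (\<lambda>j. 0))"
  have "pV (psi_of N n x) 0 = axis 1 1"
    using straight_networkD(2)[OF assms] by (simp add: psi_of_def x_def xV_def)
  then have "psi_of N n x \<noteq> zeroM" by (auto simp: zeroM_def axis_eq_0_iff)
  with psi_of_Mn show ?thesis by blast
qed

(* Needed because the SUP of a set of reals that is not bounded above is unspecified. *)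
lemma bform_ratio_bdd_above:
  assumes "straight_network N" and "P \<in> Mn N n"
  shows "bdd_above ((\<lambda>S. bform N S P / (normV N S * normM N P)) ` (Vk N k - {zeroV}))"
proof -
  obtain x where "psi_of N n x = P" using psi_of_surj[OF assms(2)] by metis
  moreover obtain C where C: "\<And>S. S \<in> Vk N k \<Longrightarrow> 0 < normV N S \<Longrightarrow> bform N S (psi_of N n x) \<le> C * normV N S"
    using bform_psi_of_bounded[OF assms(1)] by metis
  moreover have "0 \<le> normM N (psi_of N n x)"
    by (simp add: normM_psi_of H1_coeffs_nonneg sum_nonneg)
  ultimately have "bform N S P / (normV N S * normM N P) \<le> \<bar>C\<bar> / normM N P" if "S \<in> Vk N k" for S
    using that normV_nonneg[of N S]
    by (cases "normV N S = 0"; cases "normM N P = 0")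
       (auto simp: frac_le divide_le_cancel intro!: order_trans[OF divide_right_mono[OF C]])
  then show ?thesis by (intro bdd_aboveI2) auto
qed

lemma test_sigma_above_average:
  assumes SN: "straight_network N"
  obtains S where "S \<in> Vk N k - {zeroV}" "0 < normV N S" "normV N S \<le> (\<Sum>T\<in>test_sigmas N k. normV N T)"
    "(\<Sum>T\<in>test_sigmas N k. \<bar>bform N T (psi_of N n x)\<bar>) / card (test_sigmas N k) \<le> bform N S (psi_of N n x)"
proof -
  let ?T = "test_sigmas N k" and ?b = "\<lambda>S. bform N S (psi_of N n x)"
  let ?avg = "(\<Sum>T\<in>?T. \<bar>?b T\<bar>) / card ?T"
  have "test_alpha 1 \<in> ?T" by (rule test_sigmas_memI)
  then have card: "0 < card ?T" using finite_test_sigmas by (auto simp: card_gt_0_iff)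
  have "\<exists>S0\<in>?T. ?avg \<le> \<bar>?b S0\<bar>"
  proof (rule ccontr)
    assume "\<not> ?thesis"
    then have "(\<Sum>T\<in>?T. \<bar>?b T\<bar>) < card ?T * ?avg"
      using card by (intro sum_bounded_above_strict) (auto simp: not_le)
    with card show False by simp
  qed
  then obtain S0 where S0: "S0 \<in> ?T" "?avg \<le> \<bar>?b S0\<bar>" by blast
  define S where "S = (if 0 \<le> ?b S0 then S0 else neg_sigma S0)"
  have "?b S = \<bar>?b S0\<bar>" and nS: "normV N S = normV N S0"
    by (simp_all add: S_def bform_neg_sigma normV_neg_sigma)
  moreover have pos: "0 < normV N S0" using normV_test_sigmas_pos[OF SN S0(1)] .
  moreover have "S \<in> Vk N k - {zeroV}"
    using test_sigmas_Vk[OF S0(1)] neg_sigma_Vk pos nS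
    by (auto simp: S_def normV_def zeroV_def L2sq_def vecsq_def)
  moreover have "normV N S0 \<le> (\<Sum>T\<in>?T. normV N T)"
    using S0(1) finite_test_sigmas by (intro member_le_sum normV_nonneg)
  ultimately show ?thesis using S0(2) by (intro that[of S]) auto
qed

lemma uniform_inf_sup_witness:
  assumes SN: "straight_network N" and n: "n = Suc k"
  obtains kd where "0 < kd"
    "\<And>P. P \<in> Mn N n - {zeroM} \<Longrightarrow> \<exists>S\<in>Vk N k - {zeroV}. kd \<le> bform N S P / (normV N S * normM N P)"
proof -
  let ?T = "test_sigmas N k"
  obtain c where c: "0 < c" "\<And>x. x \<in> coeffs_sphere N n \<Longrightarrow> c \<le> (\<Sum>S\<in>?T. \<bar>bform N S (psi_of N n x)\<bar>)"
    using test_sum_bounded_below_on_sphere[OF SN n] by metis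
  obtain D where D: "0 < D" "\<And>x. x \<in> coeffs_sphere N n \<Longrightarrow> normM N (psi_of N n x) \<le> D"
    using normM_bounded_on_sphere by metis
  define m where "m = real (card ?T)"
  define NV where "NV = (\<Sum>S\<in>?T. normV N S)"
  have "test_alpha 1 \<in> ?T" by (rule test_sigmas_memI)
  then have m: "0 < m" and NV: "0 < NV"
    using finite_test_sigmas normV_test_sigmas_pos[OF SN] normV_nonneg
    by (auto simp: m_def NV_def card_gt_0_iff intro!: sum_pos2)
  show ?thesis
  proof (rule that)
    show "0 < c / (m * NV * D)" using c(1) m NV D(1) by simp
  next
    fix P assume "P \<in> Mn N n - {zeroM}"
    then obtain \<rho> x where \<rho>: "0 < \<rho>" and x: "x \<in> coeffs_sphere N n"
      and P_eq: "P = psi_of N n (coeffs_scale \<rho> x)"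
      using Mn_eq_scaled_sphere by blast
    obtain S where S: "S \<in> Vk N k - {zeroV}" "0 < normV N S" "normV N S \<le> NV"
      "(\<Sum>T\<in>?T. \<bar>bform N T (psi_of N n x)\<bar>) / m \<le> bform N S (psi_of N n x)"
      using test_sigma_above_average[OF SN, of k n x] unfolding NV_def m_def by metis
    have Mx: "0 < normM N (psi_of N n x)"
      using x straight_networkD(5)[OF SN] by (intro normM_psi_of_pos) (auto simp: coeffs_sphere_def)
    have cm: "c / m \<le> bform N S (psi_of N n x)"
      using divide_right_mono[OF c(2)[OF x], of m] m S(4) by linarith
    have "c / (m * NV * D) = (c / m) / (NV * D)" by simp
    also have "\<dots> \<le> bform N S (psi_of N n x) / (normV N S * normM N (psi_of N n x))"
      using cm c(1) m S(2,3) D(2)[OF x] Mx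
      by (intro frac_le mult_mono) (auto intro: order_trans[OF divide_nonneg_pos[of c m]])
    also have "\<dots> = bform N S P / (normV N S * normM N P)"
      using \<rho> by (simp add: P_eq bform_psi_of_scale normM_psi_of_scale)
    finally show "\<exists>S\<in>Vk N k - {zeroV}. c / (m * NV * D) \<le> bform N S P / (normV N S * normM N P)"
      using S(1) by blast
  qed
qed

theorem corollary4p4:
  fixes N :: network and k n :: nat
  assumes "straight_network N"
    and "n = k + 1"
  shows "\<exists>kd > 0. (INF P \<in> Mn N n - {zeroM}. SUP S \<in> Vk N k - {zeroV}.
                      bform N S P / (normV N S * normM N P)) \<ge> kd"
proof -
  have n: "n = Suc k" using assms(2) by simp
  obtain kd where kd: "0 < kd"
    "\<And>P. P \<in> Mn N n - {zeroM} \<Longrightarrow> \<exists>S\<in>Vk N k - {zeroV}. kd \<le> bform N S P / (normV N S * normM N P)"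
    using uniform_inf_sup_witness[OF assms(1) n] by blast
  have "kd \<le> (SUP S \<in> Vk N k - {zeroV}. bform N S P / (normV N S * normM N P))"
    if "P \<in> Mn N n - {zeroM}" for P
    using kd(2)[OF that] bform_ratio_bdd_above[OF assms(1)] that by (auto intro: cSUP_upper2)
  then have "kd \<le> (INF P \<in> Mn N n - {zeroM}. SUP S \<in> Vk N k - {zeroV}. bform N S P / (normV N S * normM N P))"
    by (intro cINF_greatest Mn_minus_zeroM_nonempty[OF assms(1)])
  with kd(1) show ?thesis by blast
qed

end
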